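(* Let $n\ge1$, let $H,K\le S_n$, and let $\phi:H\to\mathbb C$, $\psi:K\to\mathbb C$ be arbitrary functions. The following are equivalent: (1) $d_\phi^H(A)=d_\psi^K(A)$ for every $A\in\mathbb S_n(\mathbb C)$; (2) $d_\phi^H(S_\sigma)=d_\psi^K(S_\sigma)$ for every $\sigma\in S_n$; (3) $\sum_{\tau\in[\sigma]}\hat\phi(\tau)=\sum_{\tau\in[\sigma]}\hat\psi(\tau)$ for every $\sigma\in S_n$.
   Context: $S_n$ is the symmetric group on $[n]$; $\mathbb S_n(\mathbb C)$ is the set of complex symmetric $n\times n$ matrices. For $G\le S_n$ and $\chi:G\to\mathbb C$, $\hat\chi:S_n\to\mathbb C$ is the extension of $\chi$ by $0$ outside $G$, and $d_\chi^G(A)=\sum_{\sigma\in S_n}\hat\chi(\sigma)\prod_{i=1}^n A_{i\,\sigma(i)}$ for $A\in M_n(\mathbb C)$. For $\sigma\in S_n$, $S_\sigma$ is the $n\times n$ $0/1$ matrix with $(S_\sigma)_{ij}=1$ iff $\sigma(i)=j$ or $\sigma^{-1}(i)=j$. If $\sigma=\sigma_1\cdots\sigma_k$ is the decomposition of $\sigma$ into pairwise disjoint cycles of length at least $2$, then $[\sigma]=\{\sigma_1^{n_1}\cdots\sigma_k^{n_k}:n_j\in\{1,-1\}\}$ (a set; $[\mathrm{id}]=\{\mathrm{id}\}$). *)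

theory Defs
  imports Complex_Main "HOL-Algebra.Sym_Groups"
begin

(* S_n = carrier (sym_group n) = {p. p permutes {1..n}} *)

definition ext0 :: "(nat \<Rightarrow> nat) set \<Rightarrow> ((nat \<Rightarrow> nat) \<Rightarrow> complex) \<Rightarrow> (nat \<Rightarrow> nat) \<Rightarrow> complex" where
  "ext0 G chi = (\<lambda>s. if s \<in> G then chi s else 0)"

(* generalized matrix function d_chi^G; matrices are indexed by {1..n} *)
definition gen_matrix_fun :: "nat \<Rightarrow> (nat \<Rightarrow> nat) set \<Rightarrow> ((nat \<Rightarrow> nat) \<Rightarrow> complex)
    \<Rightarrow> (nat \<Rightarrow> nat \<Rightarrow> complex) \<Rightarrow> complex" where
  "gen_matrix_fun n G chi A =
     (\<Sum>s\<in>carrier (sym_group n). ext0 G chi s * (\<Prod>i=1..n. A i (s i)))"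

definition sym_matrix :: "nat \<Rightarrow> (nat \<Rightarrow> nat \<Rightarrow> complex) \<Rightarrow> bool" where
  "sym_matrix n A \<longleftrightarrow> (\<forall>i\<in>{1..n}. \<forall>j\<in>{1..n}. A i j = A j i)"

definition S_mat :: "(nat \<Rightarrow> nat) \<Rightarrow> nat \<Rightarrow> nat \<Rightarrow> complex" where
  "S_mat s = (\<lambda>i j. if s i = j \<or> Hilbert_Choice.inv s i = j then 1 else 0)"

definition cycle_through :: "(nat \<Rightarrow> nat) \<Rightarrow> nat \<Rightarrow> nat \<Rightarrow> nat" where
  "cycle_through s x = (\<lambda>y. if \<exists>k. (s ^^ k) x = y then s y else y)"

definition cycles_of :: "nat \<Rightarrow> (nat \<Rightarrow> nat) \<Rightarrow> (nat \<Rightarrow> nat) set" where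
  "cycles_of n s = {cycle_through s x | x. x \<in> {1..n} \<and> s x \<noteq> x}"

(* [s] = { s_1^{\<pm>1} ... s_k^{\<pm>1} }; True means exponent 1, False exponent -1 *)
definition cycle_class :: "nat \<Rightarrow> (nat \<Rightarrow> nat) \<Rightarrow> (nat \<Rightarrow> nat) set" where
  "cycle_class n s = {t. \<exists>cs es. distinct cs \<and> set cs = cycles_of n s \<and> length es = length cs \<and>
      t = foldr (\<lambda>(c, e) acc. (if e then c else Hilbert_Choice.inv c) \<circ> acc) (zip cs es) id}"

end

theory Submission
  imports Defs "HOL-Combinatorics.Orbits"
begin

text \<open>
  Everything is linear in the coefficient function, so it suffices to compare d_g with 0
  for g = ext0 H phi - ext0 K psi. For symmetric A the monomial \<Prod>i. A i (t i) only depends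
  on the undirected graph with edges {i, t i}, and the permutations with the same graph as t are exactly those
  obtained by reversing some of the cycles of t, i.e. the class [t]. Hence (3) implies (1), and
  (1) implies (2) because every S_\<sigma> is symmetric. For (2) implies (3): d_g(S_\<sigma>) is the sum of
  g over all t with t i \<in> {\<sigma> i, \<sigma>\<inverse> i} for every i. Such a t either lies in [\<sigma>] or has
  strictly fewer points i with t (t i) \<noteq> i than \<sigma>, and the latter permutations form a union of
  classes, so induction on that number isolates the sum of g over [\<sigma>].
\<close>

(* In HOL-Algebra syntax plain inv denotes the group inverse. *)
abbreviation finv :: "('a \<Rightarrow> 'b) \<Rightarrow> 'b \<Rightarrow> 'a" where
  "finv \<equiv> Hilbert_Choice.inv"

section \<open>Products of functions with disjoint moved points\<close>

definition moved_points :: "('a \<Rightarrow> 'a) \<Rightarrow> 'a set" where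
  "moved_points f = {x. f x \<noteq> x}"

lemma moved_points_closed: "inj f \<Longrightarrow> x \<in> moved_points f \<Longrightarrow> f x \<in> moved_points f"
  by (auto simp: moved_points_def dest: injD)

lemma moved_points_inv: "bij f \<Longrightarrow> moved_points (finv f) = moved_points f"
  by (auto simp: moved_points_def) (metis bij_inv_eq_iff)+

lemma bij_foldr_comp: "\<forall>f\<in>set fs. bij f \<Longrightarrow> bij (foldr (\<circ>) fs id)"
  by (induction fs) (auto intro: bij_comp)

lemma foldr_comp_fixed:
  "\<forall>f\<in>set fs. y \<notin> moved_points f \<Longrightarrow> foldr (\<circ>) fs id y = y"
  by (induction fs) (auto simp: moved_points_def)

lemma foldr_comp_on_moved_points:
  assumes "sorted_wrt (\<lambda>f g. moved_points f \<inter> moved_points g = {}) fs" "\<forall>f\<in>set fs. inj f"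
    and "f \<in> set fs" "y \<in> moved_points f"
  shows "foldr (\<circ>) fs id y = f y"
  using assms
proof (induction fs)
  case (Cons g fs)
  have unfold: "foldr (\<circ>) (g # fs) id y = g (foldr (\<circ>) fs id y)" by simp
  show ?case
  proof (cases "f = g")
    case True
    then have "\<forall>h\<in>set fs. y \<notin> moved_points h" using Cons.prems(1,4) by auto
    then have "foldr (\<circ>) fs id y = y" by (rule foldr_comp_fixed)
    then show ?thesis using True unfold by (simp only:)
  next
    case False
    then have f: "f \<in> set fs" using Cons.prems(3) by simp
    then have "foldr (\<circ>) fs id y = f y"
      using Cons.prems(1,2,4) by (intro Cons.IH) simp_all
    moreover have "f y \<notin> moved_points g"
      using Cons.prems f moved_points_closed by fastforce
    ultimately show ?thesis using unfold by (simp only: moved_points_def) simp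
  qed
qed simp

section \<open>Cycles of a permutation\<close>

lemma orbit_inv_closed:
  assumes "permutation s" "y \<in> orbit s x"
  shows "finv s y \<in> orbit s x"
  using assms orbit.step[of y "finv s" x] by (simp add: orbit_inv_eq)

lemma orbit_eq_of_mem: "permutation s \<Longrightarrow> y \<in> orbit s x \<Longrightarrow> orbit s y = orbit s x"
  by (meson cyclic_on_orbit' orbit_cyclic_eq3)

lemma cycle_through_altdef:
  "permutation s \<Longrightarrow> cycle_through s x y = (if y \<in> orbit s x then s y else y)"
  by (auto simp: cycle_through_def orbit_altdef_permutation)

lemma cycle_through_cong:
  "permutation s \<Longrightarrow> y \<in> orbit s x \<Longrightarrow> cycle_through s y = cycle_through s x"
  by (simp add: fun_eq_iff cycle_through_altdef orbit_eq_of_mem)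

lemma moved_points_cycle_through:
  assumes s: "permutation s" and x: "s x \<noteq> x"
  shows "moved_points (cycle_through s x) = orbit s x"
proof -
  have "s y \<noteq> y" if "y \<in> orbit s x" for y
  proof
    assume "s y = y"
    then have "orbit s x = {y}" using orbit_eq_of_mem[OF s that] orbit_eq_singleton_iff by metis
    then show False using x \<open>s y = y\<close> permutation_self_in_orbit[OF s, of x] by simp
  qed
  then show ?thesis by (auto simp: moved_points_def cycle_through_altdef[OF s])
qed

lemma bij_cycle_through:
  assumes s: "permutation s"
  shows "bij (cycle_through s x)"
proof (rule o_bij)
  let ?g = "\<lambda>y. if y \<in> orbit s x then finv s y else y"
  have inv: "finv s (s y) = y" "s (finv s y) = y" for y
    using permutation_bijective[OF s] by (simp_all add: bij_is_inj bij_is_surj surj_f_inv_f)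
  show "?g \<circ> cycle_through s x = id" "cycle_through s x \<circ> ?g = id"
    by (auto simp: fun_eq_iff cycle_through_altdef[OF s] inv orbit.step orbit_inv_closed[OF s])
qed

lemma inv_cycle_through:
  assumes s: "permutation s" and y: "y \<in> orbit s x"
  shows "finv (cycle_through s x) y = finv s y"
proof -
  have "cycle_through s x (finv s y) = y"
    using orbit_inv_closed[OF s y] permutation_bijective[OF s]
    by (simp add: cycle_through_altdef[OF s] bij_is_surj surj_f_inv_f)
  then show ?thesis by (metis bij_cycle_through[OF s] bij_inv_eq_iff)
qed

lemma cycle_through_in_cycles_of:
  "s permutes {1..n} \<Longrightarrow> s y \<noteq> y \<Longrightarrow> cycle_through s y \<in> cycles_of n s"
  unfolding cycles_of_def using permutes_not_in by fastforce

lemma finite_cycles_of: "finite (cycles_of n s)"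
proof -
  have "cycles_of n s = cycle_through s ` {x \<in> {1..n}. s x \<noteq> x}"
    unfolding cycles_of_def by auto
  then show ?thesis by simp
qed

lemma cycles_of_moved_points:
  assumes s: "s permutes {1..n}" and c: "c \<in> cycles_of n s" and y: "y \<in> moved_points c"
  shows "s y \<noteq> y" and "c = cycle_through s y"
proof -
  have p: "permutation s" using permutes_imp_permutation[OF _ s] by simp
  obtain x where x: "c = cycle_through s x" "s x \<noteq> x" using c unfolding cycles_of_def by blast
  have "y \<in> orbit s x" using y moved_points_cycle_through[OF p x(2)] x(1) by simp
  then show "s y \<noteq> y" "c = cycle_through s y"
    using y x cycle_through_cong[OF p]
    by (auto simp: moved_points_def cycle_through_altdef[OF p])
qed

lemma bij_cycles_of: "s permutes {1..n} \<Longrightarrow> c \<in> cycles_of n s \<Longrightarrow> bij c"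
  unfolding cycles_of_def using bij_cycle_through permutes_imp_permutation by blast

lemma cycles_of_disjoint:
  assumes "s permutes {1..n}" "c \<in> cycles_of n s" "d \<in> cycles_of n s" "c \<noteq> d"
  shows "moved_points c \<inter> moved_points d = {}"
  using assms cycles_of_moved_points(2) by blast

lemma cycles_of_index:
  assumes s: "s permutes {1..n}" and cs: "set cs = cycles_of n s" and x: "s x \<noteq> x"
  obtains j where "j < length cs" "cs ! j = cycle_through s x"
    "moved_points (cs ! j) = orbit s x"
proof -
  have "cycle_through s x \<in> set cs" using cs cycle_through_in_cycles_of[OF s x] by simp
  then obtain j where "j < length cs" "cs ! j = cycle_through s x" by (auto simp: in_set_conv_nth)
  moreover have "moved_points (cycle_through s x) = orbit s x"
    using moved_points_cycle_through[OF permutes_imp_permutation[OF _ s] x] by simp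
  ultimately show ?thesis using that by simp
qed

section \<open>The class of a permutation as an undirected graph\<close>

definition neighbours :: "('a \<Rightarrow> 'a) \<Rightarrow> 'a \<Rightarrow> 'a set" where
  "neighbours s i = {s i, finv s i}"

text \<open>
  S_\<sigma> is the adjacency matrix of the undirected graph with edges {i, \<sigma> i}, and graph_class n \<sigma>
  consists of the permutations with the same graph. It is the paper's [\<sigma>]
  (cycle_class_eq_graph_class).
\<close>
definition graph_class :: "nat \<Rightarrow> (nat \<Rightarrow> nat) \<Rightarrow> (nat \<Rightarrow> nat) set" where
  "graph_class n s = {t. t permutes {1..n} \<and> (\<forall>i. neighbours t i = neighbours s i)}"

lemma graph_class_self: "s permutes {1..n} \<Longrightarrow> s \<in> graph_class n s"
  by (simp add: graph_class_def)

lemma graph_class_eq: "t \<in> graph_class n s \<Longrightarrow> graph_class n t = graph_class n s"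
  by (auto simp: graph_class_def)

lemma same_neighbours_step:
  assumes s: "bij s" and t: "bij t" and nb: "\<forall>i. neighbours t i = neighbours s i"
    and ti: "t i \<noteq> s i"
  shows "t (s i) \<noteq> s (s i)"
proof
  assume tsi: "t (s i) = s (s i)"
  have "t i = finv s i" "finv t i = s i"
    using nb[rule_format, of i] ti unfolding neighbours_def by (auto simp: doubleton_eq_iff)
  then have "t (s i) = i" "s (t i) = i" using s t by (metis bij_inv_eq_iff)+
  then have "s (t i) = s (s i)" using tsi by simp
  then show False using ti s by (simp add: bij_is_inj inj_eq)
qed

lemma same_neighbours_funpow:
  assumes "bij s" "bij t" "\<forall>i. neighbours t i = neighbours s i" "t z \<noteq> s z"
  shows "t ((s ^^ k) z) \<noteq> s ((s ^^ k) z)"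
  by (induction k) (simp_all add: assms same_neighbours_step)

lemma same_neighbours_iff_orbitwise:
  assumes s: "permutation s" and t: "bij t"
  shows "(\<forall>i. neighbours t i = neighbours s i) \<longleftrightarrow>
    (\<forall>x. (\<forall>y\<in>orbit s x. t y = s y) \<or> (\<forall>y\<in>orbit s x. t y = finv s y))"
proof
  assume nb: "\<forall>i. neighbours t i = neighbours s i"
  have bs: "bij s" using s by (rule permutation_bijective)
  show "\<forall>x. (\<forall>y\<in>orbit s x. t y = s y) \<or> (\<forall>y\<in>orbit s x. t y = finv s y)"
  proof (intro allI)
    fix x
    have "t y = finv s y" if z: "z \<in> orbit s x" "t z \<noteq> s z" and y: "y \<in> orbit s x" for y z
    proof -
      obtain k where "y = (s ^^ k) z"
        using y orbit_eq_of_mem[OF s z(1)] by (auto simp: orbit_altdef_permutation[OF s])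
      then have "t y \<noteq> s y" using same_neighbours_funpow[OF bs t nb z(2)] by simp
      moreover have "t y \<in> neighbours s y" using nb by (metis insertI1 neighbours_def)
      ultimately show "t y = finv s y" by (simp add: neighbours_def)
    qed
    then show "(\<forall>y\<in>orbit s x. t y = s y) \<or> (\<forall>y\<in>orbit s x. t y = finv s y)" by blast
  qed
next
  assume orb: "\<forall>x. (\<forall>y\<in>orbit s x. t y = s y) \<or> (\<forall>y\<in>orbit s x. t y = finv s y)"
  have inv: "finv s (s y) = y" "s (finv s y) = y" for y
    using permutation_bijective[OF s] by (simp_all add: bij_is_inj bij_is_surj surj_f_inv_f)
  show "\<forall>i. neighbours t i = neighbours s i"
  proof
    fix i
    have si: "s i \<in> orbit s i" and fi: "finv s i \<in> orbit s i"
      by (simp_all add: orbit.base orbit_inv_closed[OF s permutation_self_in_orbit[OF s]])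
    from orb consider "\<forall>y\<in>orbit s i. t y = s y" | "\<forall>y\<in>orbit s i. t y = finv s y" by blast
    then show "neighbours t i = neighbours s i"
    proof cases
      case 1
      then have "t i = s i" "t (finv s i) = i"
        using si fi inv permutation_self_in_orbit[OF s] by auto
      then have "finv t i = finv s i" using t by (metis bij_inv_eq_iff)
      then show ?thesis using \<open>t i = s i\<close> by (simp add: neighbours_def)
    next
      case 2
      then have "t i = finv s i" "t (s i) = i"
        using si fi inv permutation_self_in_orbit[OF s] by auto
      then have "finv t i = s i" using t by (metis bij_inv_eq_iff)
      then show ?thesis using \<open>t i = finv s i\<close> by (auto simp: neighbours_def)
    qed
  qed
qed

lemma foldr_signed_eq_foldr_comp:
  "foldr (\<lambda>(c, e) acc. (if e then c else finv c) \<circ> acc) xs id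
    = foldr (\<circ>) (map (\<lambda>(c, e). if e then c else finv c) xs) id"
  by (induction xs) auto

lemma signed_cycles_product:
  assumes s: "s permutes {1..n}" and cs: "distinct cs" "set cs = cycles_of n s"
    and len: "length es = length cs"
  defines "t \<equiv> foldr (\<circ>) (map (\<lambda>(c, e). if e then c else finv c) (zip cs es)) id"
  shows "bij t" and "s y = y \<Longrightarrow> t y = y"
    and "j < length cs \<Longrightarrow> y \<in> moved_points (cs ! j) \<Longrightarrow> t y = (if es ! j then s y else finv s y)"
proof -
  have p: "permutation s" using permutes_imp_permutation[OF _ s] by simp
  define fs where "fs = map (\<lambda>(c, e). if e then c else finv c) (zip cs es)"
  have bij_cs: "bij (cs ! j)" if "j < length cs" for j
    using that cs(2) bij_cycles_of[OF s] nth_mem by blast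
  have len_fs: "length fs = length cs" using len by (simp add: fs_def)
  have fs_nth: "fs ! j = (if es ! j then cs ! j else finv (cs ! j))" if "j < length cs" for j
    using that len by (simp add: fs_def)
  have supp_fs: "moved_points (fs ! j) = moved_points (cs ! j)" if "j < length cs" for j
    using fs_nth[OF that] bij_cs[OF that] by (simp add: moved_points_inv)
  have bij_fs: "\<forall>f\<in>set fs. bij f"
    using bij_cs fs_nth len_fs by (auto simp: in_set_conv_nth bij_imp_bij_inv)
  show "bij t" unfolding t_def fs_def[symmetric] using bij_fs by (rule bij_foldr_comp)
  show "t y = y" if "s y = y"
  proof -
    have "y \<notin> moved_points (cs ! j)" if "j < length cs" for j
      using cycles_of_moved_points(1)[OF s] cs(2) that \<open>s y = y\<close> nth_mem by blast
    then have "\<forall>f\<in>set fs. y \<notin> moved_points f" using supp_fs len_fs by (auto simp: in_set_conv_nth)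
    then show ?thesis unfolding t_def fs_def[symmetric] by (rule foldr_comp_fixed)
  qed
  assume j: "j < length cs" and y: "y \<in> moved_points (cs ! j)"
  have "moved_points (fs ! i) \<inter> moved_points (fs ! k) = {}" if "i < k" "k < length cs" for i k
  proof -
    have "cs ! i \<noteq> cs ! k" using that cs(1) by (simp add: nth_eq_iff_index_eq)
    moreover have "cs ! i \<in> set cs" "cs ! k \<in> set cs" using that by simp_all
    ultimately show ?thesis using that supp_fs cycles_of_disjoint[OF s] cs(2) by simp
  qed
  then have "sorted_wrt (\<lambda>f g. moved_points f \<inter> moved_points g = {}) fs"
    unfolding sorted_wrt_iff_nth_less len_fs by blast
  then have "t y = (fs ! j) y"
    unfolding t_def fs_def[symmetric]
    using j y supp_fs len_fs bij_fs by (intro foldr_comp_on_moved_points) (auto simp: bij_is_inj)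
  moreover have "cs ! j = cycle_through s y"
    using cycles_of_moved_points(2)[OF s _ y] cs(2) j nth_mem by blast
  ultimately show "t y = (if es ! j then s y else finv s y)"
    using fs_nth[OF j] permutation_self_in_orbit[OF p, of y]
    by (simp add: cycle_through_altdef[OF p] inv_cycle_through[OF p])
qed

lemma cycle_class_subset_graph_class:
  assumes s: "s permutes {1..n}"
  shows "cycle_class n s \<subseteq> graph_class n s"
proof
  fix t assume "t \<in> cycle_class n s"
  then obtain cs es where cs: "distinct cs" "set cs = cycles_of n s" "length es = length cs"
    and t: "t = foldr (\<circ>) (map (\<lambda>(c, e). if e then c else finv c) (zip cs es)) id"
    unfolding cycle_class_def foldr_signed_eq_foldr_comp by blast
  note t_apply = signed_cycles_product[OF s cs, folded t]
  have "(\<forall>y\<in>orbit s x. t y = s y) \<or> (\<forall>y\<in>orbit s x. t y = finv s y)" for x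
  proof (cases "s x = x")
    case True
    then show ?thesis using t_apply(2) by (simp add: orbit_eq_singleton_iff[THEN iffD2])
  next
    case False
    then obtain j where "j < length cs" "moved_points (cs ! j) = orbit s x"
      using cycles_of_index[OF s cs(2)] by blast
    then show ?thesis using t_apply(3) by (cases "es ! j") auto
  qed
  moreover have "t permutes {1..n}"
    using t_apply(1,2) permutes_not_in[OF s] by (auto simp: permutes_def bij_iff)
  ultimately show "t \<in> graph_class n s"
    using same_neighbours_iff_orbitwise[OF permutes_imp_permutation[OF _ s] t_apply(1)]
    by (simp add: graph_class_def)
qed

lemma graph_class_subset_cycle_class:
  assumes s: "s permutes {1..n}"
  shows "graph_class n s \<subseteq> cycle_class n s"
proof
  fix t assume "t \<in> graph_class n s"
  then have t: "t permutes {1..n}" and nb: "\<forall>i. neighbours t i = neighbours s i"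
    by (auto simp: graph_class_def)
  have p: "permutation s" using permutes_imp_permutation[OF _ s] by simp
  have orbitwise: "\<forall>x. (\<forall>y\<in>orbit s x. t y = s y) \<or> (\<forall>y\<in>orbit s x. t y = finv s y)"
    using nb same_neighbours_iff_orbitwise[OF p permutes_bij[OF t]] by blast
  obtain cs where cs: "distinct cs" "set cs = cycles_of n s"
    using finite_distinct_list[OF finite_cycles_of] by metis
  \<comment> \<open>a cycle keeps its orientation iff t agrees with it\<close>
  define es where "es = map (\<lambda>c. \<forall>y\<in>moved_points c. t y = c y) cs"
  have len: "length es = length cs" by (simp add: es_def)
  define u where "u = foldr (\<circ>) (map (\<lambda>(c, e). if e then c else finv c) (zip cs es)) id"
  note u_apply = signed_cycles_product[OF s cs len, folded u_def]
  have "t y = u y" for y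
  proof (cases "s y = y")
    case True
    moreover have "finv s y = y" using True p by (metis bij_inv_eq_iff permutation_bijective)
    ultimately show ?thesis using u_apply(2) orbitwise orbit.base[of s y] by force
  next
    case False
    obtain j where j: "j < length cs" "cs ! j = cycle_through s y"
      and supp: "moved_points (cs ! j) = orbit s y"
      by (rule cycles_of_index[OF s cs(2) False])
    have y: "y \<in> orbit s y" by (rule permutation_self_in_orbit[OF p])
    have cs_j: "(cs ! j) z = s z" if "z \<in> orbit s y" for z
      using that j(2) by (simp add: cycle_through_altdef[OF p])
    show ?thesis
    proof (cases "es ! j")
      case True
      then show ?thesis using u_apply(3)[OF j(1)] supp y cs_j j(1) by (simp add: es_def)
    next
      case False
      then have "\<not> (\<forall>z\<in>orbit s y. t z = s z)" using supp cs_j j(1) by (simp add: es_def)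
      then show ?thesis using u_apply(3)[OF j(1)] False supp y orbitwise by auto
    qed
  qed
  then show "t \<in> cycle_class n s"
    unfolding cycle_class_def foldr_signed_eq_foldr_comp using cs len u_def by blast
qed

lemma cycle_class_eq_graph_class: "s permutes {1..n} \<Longrightarrow> cycle_class n s = graph_class n s"
  using cycle_class_subset_graph_class graph_class_subset_cycle_class by blast

section \<open>Generalized matrix functions on symmetric matrices\<close>

lemma sum_eq_0_over_classes:
  assumes X: "finite X" and cls: "\<And>t. t \<in> X \<Longrightarrow> t \<in> C t \<and> C t \<subseteq> X \<and> sum g (C t) = 0"
    and disj: "\<And>t u. t \<in> X \<Longrightarrow> u \<in> X \<Longrightarrow> C t \<inter> C u \<noteq> {} \<Longrightarrow> C t = C u"
  shows "sum g X = 0"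
proof -
  have "X = \<Union>(C ` X)" using cls by blast
  moreover have "sum g (\<Union>(C ` X)) = sum (sum g) (C ` X)"
  proof (rule sum.Union_disjoint[simplified])
    show "\<forall>A\<in>C ` X. finite A" using X cls finite_subset by blast
    show "\<forall>A\<in>C ` X. \<forall>B\<in>C ` X. A \<noteq> B \<longrightarrow> A \<inter> B = {}" using disj by blast
  qed
  moreover have "sum (sum g) (C ` X) = 0" using cls by (intro sum.neutral) blast
  ultimately show ?thesis by simp
qed

lemma gen_matrix_fun_UNIV:
  "gen_matrix_fun n UNIV g A = (\<Sum>t | t permutes {1..n}. g t * (\<Prod>i=1..n. A i (t i)))"
  by (simp add: gen_matrix_fun_def ext0_def sym_group_def)

lemma gen_matrix_fun_diff:
  "gen_matrix_fun n H phi A - gen_matrix_fun n K psi A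
    = gen_matrix_fun n UNIV (\<lambda>t. ext0 H phi t - ext0 K psi t) A"
  by (simp add: gen_matrix_fun_def ext0_def sum_subtractf[symmetric] left_diff_distrib)

lemma prod_sym_matrix_graph_class:
  assumes A: "sym_matrix n A" and s: "s permutes {1..n}" and t: "t \<in> graph_class n s"
  shows "(\<Prod>i=1..n. A i (t i)) = (\<Prod>i=1..n. A i (s i))"
proof -
  have tp: "t permutes {1..n}" and nb: "\<forall>i. neighbours t i = neighbours s i"
    using t by (auto simp: graph_class_def)
  define V where "V = {i\<in>{1..n}. t i \<noteq> s i}"
  have V: "V \<subseteq> {1..n}" by (auto simp: V_def)
  have tV: "t i = finv s i" if "i \<in> V" for i
    using that nb[rule_format, of i] by (auto simp: V_def neighbours_def doubleton_eq_iff)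
  have "s ` V \<subseteq> V"
    using same_neighbours_step[OF permutes_bij[OF s] permutes_bij[OF tp] nb]
      permutes_in_image[OF s] by (auto simp: V_def)
  then have "bij_betw s V V"
    using V permutes_inj[OF s] by (metis endo_inj_surj finite_atLeastAtMost finite_subset
      inj_on_imp_bij_betw inj_on_subset subset_UNIV)
  have "(\<Prod>i=1..n. A i (t i)) = (\<Prod>i\<in>{1..n}-V. A i (t i)) * (\<Prod>i\<in>V. A i (t i))"
    by (rule prod.subset_diff[OF V]) simp
  also have "(\<Prod>i\<in>{1..n}-V. A i (t i)) = (\<Prod>i\<in>{1..n}-V. A i (s i))"
    by (rule prod.cong) (auto simp: V_def)
  also have "(\<Prod>i\<in>V. A i (t i)) = (\<Prod>i\<in>V. A (finv s i) i)"
  proof (rule prod.cong)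
    fix i assume i: "i \<in> V"
    then have "i \<in> {1..n}" "finv s i \<in> {1..n}"
      using V permutes_in_image[OF permutes_inv[OF s]] by auto
    then show "A i (t i) = A (finv s i) i" using tV[OF i] A by (simp add: sym_matrix_def)
  qed simp
  also have "\<dots> = (\<Prod>i\<in>V. A (finv s (s i)) (s i))"
    by (rule prod.reindex_bij_betw[OF \<open>bij_betw s V V\<close>, symmetric])
  also have "\<dots> = (\<Prod>i\<in>V. A i (s i))" by (simp add: permutes_inverses[OF s])
  also have "(\<Prod>i\<in>{1..n}-V. A i (s i)) * (\<Prod>i\<in>V. A i (s i)) = (\<Prod>i=1..n. A i (s i))"
    by (rule prod.subset_diff[OF V, symmetric]) simp
  finally show ?thesis .
qed

lemma gen_matrix_fun_sym_eq_0:
  assumes g: "\<forall>s. s permutes {1..n} \<longrightarrow> sum g (graph_class n s) = 0" and A: "sym_matrix n A"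
  shows "gen_matrix_fun n UNIV g A = 0"
  unfolding gen_matrix_fun_UNIV
proof (rule sum_eq_0_over_classes[where C = "graph_class n"])
  fix s assume "s \<in> {t. t permutes {1..n}}"
  then have s: "s permutes {1..n}" by simp
  have "(\<Sum>t\<in>graph_class n s. g t * (\<Prod>i=1..n. A i (t i)))
      = (\<Sum>t\<in>graph_class n s. g t * (\<Prod>i=1..n. A i (s i)))"
    using prod_sym_matrix_graph_class[OF A s] by simp
  also have "\<dots> = sum g (graph_class n s) * (\<Prod>i=1..n. A i (s i))"
    by (simp add: sum_distrib_right)
  finally show "s \<in> graph_class n s \<and> graph_class n s \<subseteq> {t. t permutes {1..n}}
      \<and> (\<Sum>t\<in>graph_class n s. g t * (\<Prod>i=1..n. A i (t i))) = 0"
    using g s graph_class_self[OF s] by (auto simp: graph_class_def)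
next
  show "graph_class n s = graph_class n u" if "graph_class n s \<inter> graph_class n u \<noteq> {}" for s u
    using that graph_class_eq by blast
qed (simp add: finite_permutations)

section \<open>Generalized matrix functions at the matrices S_\<sigma>\<close>

lemma neighbours_sym: "bij s \<Longrightarrow> j \<in> neighbours s i \<longleftrightarrow> i \<in> neighbours s j"
  by (auto simp: neighbours_def bij_inv_eq_iff)

lemma S_mat_eq: "S_mat s i j = (if j \<in> neighbours s i then 1 else 0)"
  by (auto simp: S_mat_def neighbours_def)

lemma sym_matrix_S_mat: "bij s \<Longrightarrow> sym_matrix n (S_mat s)"
  by (simp add: sym_matrix_def S_mat_eq neighbours_sym)

definition neighbour_perms :: "nat \<Rightarrow> (nat \<Rightarrow> nat) \<Rightarrow> (nat \<Rightarrow> nat) set" where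
  "neighbour_perms n s = {t. t permutes {1..n} \<and> (\<forall>i. t i \<in> neighbours s i)}"

lemma gen_matrix_fun_S_mat:
  assumes s: "s permutes {1..n}"
  shows "gen_matrix_fun n UNIV g (S_mat s) = sum g (neighbour_perms n s)"
proof -
  have "(\<Prod>i=1..n. S_mat s i (t i)) = (if t \<in> neighbour_perms n s then 1 else 0)"
    if t: "t permutes {1..n}" for t
  proof -
    have "t i \<in> neighbours s i" if "i \<notin> {1..n}" for i
      using permutes_not_in[OF t that] permutes_not_in[OF s that] by (simp add: neighbours_def)
    then have "t \<in> neighbour_perms n s \<longleftrightarrow> (\<forall>i\<in>{1..n}. t i \<in> neighbours s i)"
      using t by (auto simp: neighbour_perms_def)
    then show ?thesis by (auto simp: S_mat_eq prod_zero_iff)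
  qed
  then have "gen_matrix_fun n UNIV g (S_mat s)
      = (\<Sum>t | t permutes {1..n}. if t \<in> neighbour_perms n s then g t else 0)"
    unfolding gen_matrix_fun_UNIV by (intro sum.cong) auto
  also have "\<dots> = sum g (neighbour_perms n s)"
    by (simp add: sum.If_cases finite_permutations neighbour_perms_def Collect_conj_eq[symmetric])
  finally show ?thesis .
qed

lemma graph_class_subset_neighbour_perms: "graph_class n s \<subseteq> neighbour_perms n s"
  by (auto simp: graph_class_def neighbour_perms_def neighbours_def)

lemma neighbour_perms_inv:
  assumes s: "bij s" and t: "t \<in> neighbour_perms n s"
  shows "finv t i \<in> neighbours s i"
proof -
  have "bij t" using t by (auto simp: neighbour_perms_def permutes_bij)
  then have "t (finv t i) = i" by (simp add: bij_is_surj surj_f_inv_f)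
  then show ?thesis using t neighbours_sym[OF s] by (metis (mono_tags) mem_Collect_eq neighbour_perms_def)
qed

definition noninvolutive_points :: "nat \<Rightarrow> (nat \<Rightarrow> nat) \<Rightarrow> nat set" where
  "noninvolutive_points n s = {i\<in>{1..n}. s (s i) \<noteq> i}"

lemma neighbours_involutive: "bij s \<Longrightarrow> s (s i) = i \<Longrightarrow> neighbours s i = {s i}"
proof -
  assume "bij s" "s (s i) = i"
  then have "finv s i = s i" by (metis bij_inv_eq_iff)
  then show ?thesis by (simp add: neighbours_def)
qed

lemma noninvolutive_points_mono:
  assumes s: "bij s" and t: "t \<in> neighbour_perms n s"
  shows "noninvolutive_points n t \<subseteq> noninvolutive_points n s"
proof
  fix i assume i: "i \<in> noninvolutive_points n t"
  show "i \<in> noninvolutive_points n s"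
  proof (rule ccontr)
    assume "i \<notin> noninvolutive_points n s"
    then have "s (s i) = i" using i by (simp add: noninvolutive_points_def)
    moreover have "t i \<in> neighbours s i" "t (s i) \<in> neighbours s (s i)"
      using t by (auto simp: neighbour_perms_def)
    ultimately have "t i = s i" "t (s i) = i"
      using neighbours_involutive[OF s] by (metis singletonD)+
    then show False using i by (simp add: noninvolutive_points_def)
  qed
qed

lemma neighbour_perms_graph_classI:
  assumes s: "s permutes {1..n}" and t: "t \<in> neighbour_perms n s"
    and eq: "noninvolutive_points n t = noninvolutive_points n s"
  shows "t \<in> graph_class n s"
proof -
  have bs: "bij s" and tp: "t permutes {1..n}" and bt: "bij t"
    using s t by (auto simp: neighbour_perms_def permutes_bij)
  have "neighbours t i = neighbours s i" for i
  proof -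
    have ti: "t i \<in> neighbours s i" "finv t i \<in> neighbours s i"
      using t neighbour_perms_inv[OF bs t] by (auto simp: neighbour_perms_def)
    show ?thesis
    proof (cases "s (s i) = i")
      case True
      then show ?thesis using ti neighbours_involutive[OF bs] by (auto simp: neighbours_def)
    next
      case False
      then have "i \<in> noninvolutive_points n t"
        using eq permutes_not_in[OF s] by (fastforce simp: noninvolutive_points_def)
      then have "t i \<noteq> finv t i" "s i \<noteq> finv s i"
        using False bt bs by (auto simp: noninvolutive_points_def bij_inv_eq_iff)
      then show ?thesis using ti by (auto simp: neighbours_def)
    qed
  qed
  then show ?thesis using tp by (simp add: graph_class_def)
qed

lemma neighbour_perms_minus_graph_class_closed:
  assumes s: "s permutes {1..n}" and t: "t \<in> neighbour_perms n s - graph_class n s"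
    and u: "u \<in> graph_class n t"
  shows "u \<in> neighbour_perms n s - graph_class n s"
proof -
  have "u i \<in> neighbours s i" for i
  proof -
    have "u i \<in> neighbours t i" using u by (auto simp: graph_class_def neighbours_def)
    moreover have "t i \<in> neighbours s i" "finv t i \<in> neighbours s i"
      using t neighbour_perms_inv[OF permutes_bij[OF s]] by (auto simp: neighbour_perms_def)
    ultimately show ?thesis unfolding neighbours_def by (metis insertE singletonD)
  qed
  moreover have "u \<notin> graph_class n s"
  proof
    assume "u \<in> graph_class n s"
    then have "graph_class n t = graph_class n s" using graph_class_eq u by metis
    moreover have "t \<in> graph_class n t" using t by (simp add: graph_class_self neighbour_perms_def)
    ultimately show False using t by simp
  qed
  ultimately show ?thesis using u by (auto simp: graph_class_def neighbour_perms_def)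
qed

lemma graph_class_sum_eq_0:
  assumes g: "\<forall>s. s permutes {1..n} \<longrightarrow> gen_matrix_fun n UNIV g (S_mat s) = 0"
  shows "s permutes {1..n} \<Longrightarrow> sum g (graph_class n s) = 0"
proof (induction s rule: measure_induct_rule[of "\<lambda>s. card (noninvolutive_points n s)"])
  case (less s)
  let ?R = "neighbour_perms n s - graph_class n s"
  have fin: "finite (neighbour_perms n s)"
    by (rule finite_subset[OF _ finite_permutations[of "{1..n}"]]) (auto simp: neighbour_perms_def)
  have "sum g ?R = 0"
  proof (rule sum_eq_0_over_classes[where C = "graph_class n"])
    fix t assume t: "t \<in> ?R"
    then have tp: "t permutes {1..n}" by (simp add: neighbour_perms_def)
    have "noninvolutive_points n t \<subset> noninvolutive_points n s"
      using t noninvolutive_points_mono[OF permutes_bij[OF less.prems]]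
        neighbour_perms_graph_classI[OF less.prems] by blast
    then have "card (noninvolutive_points n t) < card (noninvolutive_points n s)"
      by (rule psubset_card_mono[rotated]) (simp add: noninvolutive_points_def)
    then show "t \<in> graph_class n t \<and> graph_class n t \<subseteq> ?R \<and> sum g (graph_class n t) = 0"
      using less.IH tp t graph_class_self neighbour_perms_minus_graph_class_closed[OF less.prems] by blast
  next
    show "graph_class n t = graph_class n u" if "graph_class n t \<inter> graph_class n u \<noteq> {}" for t u
      using that graph_class_eq by blast
  qed (use fin in simp)
  moreover have "sum g (neighbour_perms n s) = 0"
    using g less.prems gen_matrix_fun_S_mat by simp
  ultimately show ?case
    using sum.subset_diff[OF graph_class_subset_neighbour_perms fin, of g] by simp
qed

theorem mainTheorem6:
  fixes n :: nat and H K :: "(nat \<Rightarrow> nat) set"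
    and phi psi :: "(nat \<Rightarrow> nat) \<Rightarrow> complex"
  assumes "n \<ge> 1"
    and "subgroup H (sym_group n)" and "subgroup K (sym_group n)"
  shows "((\<forall>A. sym_matrix n A \<longrightarrow> gen_matrix_fun n H phi A = gen_matrix_fun n K psi A)
           \<longleftrightarrow> (\<forall>s\<in>carrier (sym_group n).
                 gen_matrix_fun n H phi (S_mat s) = gen_matrix_fun n K psi (S_mat s)))
       \<and> ((\<forall>s\<in>carrier (sym_group n).
                 gen_matrix_fun n H phi (S_mat s) = gen_matrix_fun n K psi (S_mat s))
           \<longleftrightarrow> (\<forall>s\<in>carrier (sym_group n).
                 (\<Sum>t\<in>cycle_class n s. ext0 H phi t) = (\<Sum>t\<in>cycle_class n s. ext0 K psi t)))"
proof -
  define g where "g = (\<lambda>t. ext0 H phi t - ext0 K psi t)"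
  have Sn: "carrier (sym_group n) = {s. s permutes {1..n}}" by (simp add: sym_group_def)
  have matrix_eq: "gen_matrix_fun n H phi A = gen_matrix_fun n K psi A
      \<longleftrightarrow> gen_matrix_fun n UNIV g A = 0" for A
    unfolding eq_iff_diff_eq_0[of "gen_matrix_fun n H phi A"] gen_matrix_fun_diff g_def ..
  have class_eq: "(\<Sum>t\<in>cycle_class n s. ext0 H phi t) = (\<Sum>t\<in>cycle_class n s. ext0 K psi t)
      \<longleftrightarrow> sum g (graph_class n s) = 0" if "s permutes {1..n}" for s
    using that by (simp add: cycle_class_eq_graph_class g_def sum_subtractf)
  show ?thesis
    unfolding matrix_eq Sn using class_eq
      sym_matrix_S_mat[OF permutes_bij] gen_matrix_fun_sym_eq_0 graph_class_sum_eq_0 by blast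
qed

end
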